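(* Assume Conditions C1–C4 hold. Let $r_1\in(0,\frac{r}{8+r})$ and $r_2=\min\big(\frac{r}{32+4r},\frac{4+r}{32+4r}-\frac{r_1}{4}\big)$, and suppose $p=o\{\exp(n^{r_1-c})\}$ and $m_0=o(n^{r_2-c})$ for some arbitrarily small $c\in(0,\min\{r_1,r_2\})$. Then $\|S-\Theta\|_{max}=o_p(m_0^{-2})$.
   Context: Asymptotic setting: for each $n$, $X=(X_1,\dots,X_p)^\top$ has mean zero and positive definite covariance $\Theta=(\theta_{jk})$ ($p,\Theta$ may depend on $n$); $X^{(1)},\dots,X^{(n)}$ i.i.d. copies; $S=(S_{jk})=n^{-1}\sum_iX^{(i)}X^{(i)\top}$; $\|\cdot\|_{max}$ is the maximum absolute entry. Index the $m=p(p+1)/2$ pairs $jk$, $1\le j\le k\le p$, in order $11,\dots,1p,22,\dots,pp$; $\theta=\mathrm{vech}(\Theta)$, $s=\mathrm{vech}(S)$. For $\vartheta\in\mathbb{R}^m$, $x\in\mathbb{R}^p$: $\ell_{jj}(\vartheta;x)=-\log\vartheta_{jj}-x_j^2/\vartheta_{jj}$; for $j<k$, $\ell_{jk}(\vartheta;x)=-\log(\vartheta_{jj}\vartheta_{kk}-\vartheta_{jk}^2)-(\vartheta_{kk}x_j^2-2\vartheta_{jk}x_jx_k+\vartheta_{jj}x_k^2)/(\vartheta_{jj}\vartheta_{kk}-\vartheta_{jk}^2)$; $u_{jk}=\partial\ell_{jk}/\partial\vartheta\in\mathbb{R}^m$; $U(\vartheta;x)$ the $m\times m$ matrix with columns $u_{jk}(\vartheta;x)$;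 $J=\mathbb{E}[U(\theta;X)^\top U(\theta;X)]$, $h=\mathrm{diag}(J)$. $m_0$ is the number of pairs $j<k$ with $\theta_{jk}\ne0$; $\xi=\{jk:j<k,\theta_{jk}\ne0\}\cup\{jj:\theta_{jl}\ne0\text{ for some }l\ne j\}$; $a_A$, $M_A$, $M_{A,B}$ denote subvectors/submatrices on index sets. Conditions: C1: entries of $\Theta$ uniformly bounded; nonzero entries bounded away from $0$ in absolute value. C2: entries of $J$, $J_\xi^{-1}$, $J_\xi^{-1}h_\xi$ uniformly bounded. C3: there is $c>0$, for all $m_0\ge1$, with $\min_x\|J_{\xi,\xi_{-l}}x-h_\xi\|_1>c$ for all $l=1,\dots,|\xi|$ ($x\in\mathbb{R}^{|\xi|-1}$, $J_{\xi,\xi_{-l}}$ is $J_\xi$ without its $l$-th column). C4: there exist $r>0$, $c>0$ with $\Pr(|X_j|>t)<c\exp(-t^r)$ for all $t\ge0$, $j=1,\dots,p$. *)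

theory Defs
  imports "HOL-Probability.Probability" "HOL-Library.Landau_Symbols"
begin

text \<open>Model: for each sample size n, a probability space M n, dimension p n,
 and random vectors X n i (i < n are the i.i.d. copies, X n 0 also serves as the
 generic X).\<close>

definition Theta :: "(nat \<Rightarrow> 'a measure) \<Rightarrow> (nat \<Rightarrow> nat \<Rightarrow> 'a \<Rightarrow> nat \<Rightarrow> real)
    \<Rightarrow> nat \<Rightarrow> nat \<Rightarrow> nat \<Rightarrow> real" where
  "Theta M X n j k = integral\<^sup>L (M n) (\<lambda>w. X n 0 w j * X n 0 w k)"

definition pairs :: "nat \<Rightarrow> (nat \<times> nat) set" where
  "pairs p = {(j,k). j \<le> k \<and> k < p}"

text \<open>Pairwise (and marginal) Gaussian log-likelihoods; vartheta is indexed by pairs.\<close>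
definition loglik :: "nat \<times> nat \<Rightarrow> (nat \<times> nat \<Rightarrow> real) \<Rightarrow> (nat \<Rightarrow> real) \<Rightarrow> real" where
  "loglik a v x = (case a of (j,k) \<Rightarrow>
     if j = k then - ln (v (j,j)) - (x j)\<^sup>2 / v (j,j)
     else - ln (v (j,j) * v (k,k) - (v (j,k))\<^sup>2)
          - (v (k,k) * (x j)\<^sup>2 - 2 * v (j,k) * x j * x k + v (j,j) * (x k)\<^sup>2)
            / (v (j,j) * v (k,k) - (v (j,k))\<^sup>2))"

definition score :: "nat \<times> nat \<Rightarrow> (nat \<times> nat \<Rightarrow> real) \<Rightarrow> (nat \<Rightarrow> real) \<Rightarrow> nat \<times> nat \<Rightarrow> real" where
  "score a v x c = deriv (\<lambda>t. loglik a (v(c := t)) x) (v c)"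

definition theta_vec :: "(nat \<Rightarrow> 'a measure) \<Rightarrow> (nat \<Rightarrow> nat \<Rightarrow> 'a \<Rightarrow> nat \<Rightarrow> real)
    \<Rightarrow> nat \<Rightarrow> nat \<times> nat \<Rightarrow> real" where
  "theta_vec M X n = (\<lambda>(j,k). Theta M X n j k)"

text \<open>J = E[U^T U], entry (a,b) = E[ sum_c u_a(c) u_b(c) ].\<close>
definition Jmat :: "(nat \<Rightarrow> 'a measure) \<Rightarrow> (nat \<Rightarrow> nat) \<Rightarrow> (nat \<Rightarrow> nat \<Rightarrow> 'a \<Rightarrow> nat \<Rightarrow> real)
    \<Rightarrow> nat \<Rightarrow> nat \<times> nat \<Rightarrow> nat \<times> nat \<Rightarrow> real" where
  "Jmat M p X n a b = integral\<^sup>L (M n) (\<lambda>w. \<Sum>c\<in>pairs (p n).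
      score a (theta_vec M X n) (X n 0 w) c * score b (theta_vec M X n) (X n 0 w) c)"

definition hvec :: "(nat \<Rightarrow> 'a measure) \<Rightarrow> (nat \<Rightarrow> nat) \<Rightarrow> (nat \<Rightarrow> nat \<Rightarrow> 'a \<Rightarrow> nat \<Rightarrow> real)
    \<Rightarrow> nat \<Rightarrow> nat \<times> nat \<Rightarrow> real" where
  "hvec M p X n a = Jmat M p X n a a"

definition m0 :: "(nat \<Rightarrow> 'a measure) \<Rightarrow> (nat \<Rightarrow> nat) \<Rightarrow> (nat \<Rightarrow> nat \<Rightarrow> 'a \<Rightarrow> nat \<Rightarrow> real)
    \<Rightarrow> nat \<Rightarrow> nat" where
  "m0 M p X n = card {(j,k). j < k \<and> k < p n \<and> Theta M X n j k \<noteq> 0}"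

definition xi :: "(nat \<Rightarrow> 'a measure) \<Rightarrow> (nat \<Rightarrow> nat) \<Rightarrow> (nat \<Rightarrow> nat \<Rightarrow> 'a \<Rightarrow> nat \<Rightarrow> real)
    \<Rightarrow> nat \<Rightarrow> (nat \<times> nat) set" where
  "xi M p X n = {(j,k). j < k \<and> k < p n \<and> Theta M X n j k \<noteq> 0}
     \<union> {(j,j) | j. j < p n \<and> (\<exists>l < p n. l \<noteq> j \<and> Theta M X n j l \<noteq> 0)}"

definition is_inverse_on :: "('b \<Rightarrow> 'b \<Rightarrow> real) \<Rightarrow> ('b \<Rightarrow> 'b \<Rightarrow> real) \<Rightarrow> 'b set \<Rightarrow> bool" where
  "is_inverse_on A B I = (\<forall>a\<in>I. \<forall>b\<in>I. (\<Sum>c\<in>I. A a c * B c b) = (if a = b then 1 else 0))"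

definition Scov :: "(nat \<Rightarrow> nat \<Rightarrow> 'a \<Rightarrow> nat \<Rightarrow> real) \<Rightarrow> nat \<Rightarrow> 'a \<Rightarrow> nat \<Rightarrow> nat \<Rightarrow> real" where
  "Scov X n w j k = (\<Sum>i<n. X n i w j * X n i w k) / real n"

definition maxdev :: "(nat \<Rightarrow> 'a measure) \<Rightarrow> (nat \<Rightarrow> nat) \<Rightarrow> (nat \<Rightarrow> nat \<Rightarrow> 'a \<Rightarrow> nat \<Rightarrow> real)
    \<Rightarrow> nat \<Rightarrow> 'a \<Rightarrow> real" where
  "maxdev M p X n w = Max (insert 0 {\<bar>Scov X n w j k - Theta M X n j k\<bar> | j k. j < p n \<and> k < p n})"

end

theory Submission
  imports Defs "HOL-Real_Asymp.Real_Asymp"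
begin

(* Clip every coordinate
   at T = n^b. With probability at least 1 - n p c exp(-n^(b r)) no coordinate is clipped, and then
   every entry of S is an average of n i.i.d. products of clipped coordinates, which are bounded
   by T^2: Hoeffding's inequality and a union bound over the p^2 entries control their deviations
   from their means, while the moments of order q implied by C4 bound the clipping bias by a
   multiple of T^(2-q). Since m0^2 <= n^a with a = 2 (r2 - c), it suffices to bound the probability
   that the maximal deviation exceeds e n^(-a); both error terms vanish once r1 - c < b r and
   4 b < 1 - 2 a - (r1 - c), and such a b exists precisely because of the constraints on r1, r2. *)

definition tail_moment_const :: "real \<Rightarrow> nat \<Rightarrow> real" where
  "tail_moment_const r q = (\<Sum>k. real (k + 1) ^ q * exp (- (real k powr r)))"

lemma summable_tail_moment_series:
  assumes "r > 0"
  shows "summable (\<lambda>k::nat. real (k + 1) ^ q * exp (- (real k powr r)))"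
proof (rule summable_comparison_test_bigo)
  show "summable (\<lambda>k. norm (inverse (real k ^ 2)))"
    using inverse_power_summable[of 2, where 'a=real] by simp
  show "(\<lambda>k::nat. real (k + 1) ^ q * exp (- (real k powr r))) \<in> O(\<lambda>k. inverse (real k ^ 2))"
    using assms by real_asymp
qed

lemma tail_moment_const_nonneg:
  assumes "r > 0"
  shows "tail_moment_const r q \<ge> 0"
  unfolding tail_moment_const_def
  by (rule suminf_nonneg[OF summable_tail_moment_series[OF assms]]) simp

lemma abs_power_le_suminf_indicator:
  fixes z :: real
  assumes "q \<ge> 1"
  shows "ennreal (\<bar>z\<bar> ^ q) \<le> (\<Sum>k. ennreal (real (k + 1) ^ q) * indicator {x. \<bar>x\<bar> > real k} z)"
proof (cases "z = 0")
  case True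
  then show ?thesis using assms by simp
next
  case False
  define m where "m = nat \<lceil>\<bar>z\<bar>\<rceil> - 1"
  have m_less: "real m < \<bar>z\<bar>" and m_ge: "\<bar>z\<bar> \<le> real m + 1"
    using False unfolding m_def by linarith+
  have "\<bar>z\<bar> ^ q \<le> (real m + 1) ^ q"
    by (rule power_mono) (use m_ge in auto)
  then have "ennreal (\<bar>z\<bar> ^ q) \<le> ennreal (real (m + 1) ^ q) * indicator {x. \<bar>x\<bar> > real m} z"
    using m_less by (simp add: add.commute)
  also have "\<dots> \<le> (\<Sum>k. ennreal (real (k + 1) ^ q) * indicator {x. \<bar>x\<bar> > real k} z)"
  proof -
    define f where "f = (\<lambda>k. ennreal (real (k + 1) ^ q) * indicator {x. \<bar>x\<bar> > real k} z)"
    have "f m \<le> suminf f"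
      using sum_le_suminf[OF summableI, of "{m}" f] by simp
    then show ?thesis unfolding f_def .
  qed
  finally show ?thesis .
qed

lemma (in prob_space) tail_bound_const_nonneg:
  assumes "\<And>t. t \<ge> 0 \<Longrightarrow> prob {w \<in> space M. \<bar>Z w\<bar> > t} \<le> c * exp (- (t powr r))"
  shows "c \<ge> 0"
  using order_trans[OF measure_nonneg assms[of 0]] by simp

lemma (in prob_space) nn_integral_abs_power_le_of_tail_bound:
  fixes Z :: "'a \<Rightarrow> real" and q :: nat
  assumes Z_meas: "Z \<in> borel_measurable M" and r: "r > 0" and q: "q \<ge> 1"
    and tail: "\<And>t. t \<ge> 0 \<Longrightarrow> prob {w \<in> space M. \<bar>Z w\<bar> > t} \<le> c * exp (- (t powr r))"
  shows "(\<integral>\<^sup>+w. ennreal (\<bar>Z w\<bar> ^ q) \<partial>M) \<le> ennreal (c * tail_moment_const r q)"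
proof -
  have c_nonneg: "c \<ge> 0"
    using tail by (rule tail_bound_const_nonneg)
  have level_sets [measurable]: "{w \<in> space M. \<bar>Z w\<bar> > real k} \<in> sets M" for k
    using Z_meas by measurable
  have "(\<integral>\<^sup>+w. ennreal (\<bar>Z w\<bar> ^ q) \<partial>M)
      \<le> (\<integral>\<^sup>+w. (\<Sum>k. ennreal (real (k + 1) ^ q) * indicator {w \<in> space M. \<bar>Z w\<bar> > real k} w) \<partial>M)"
  proof (rule nn_integral_mono)
    fix w assume "w \<in> space M"
    then show "ennreal (\<bar>Z w\<bar> ^ q)
        \<le> (\<Sum>k. ennreal (real (k + 1) ^ q) * indicator {w \<in> space M. \<bar>Z w\<bar> > real k} w)"
      using abs_power_le_suminf_indicator[OF q, of "Z w"] by (simp add: indicator_def)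
  qed
  also have "\<dots> = (\<Sum>k. ennreal (real (k + 1) ^ q) * emeasure M {w \<in> space M. \<bar>Z w\<bar> > real k})"
    by (subst nn_integral_suminf) (simp_all add: nn_integral_cmult_indicator)
  also have "\<dots> \<le> (\<Sum>k. ennreal (c * (real (k + 1) ^ q * exp (- (real k powr r)))))"
  proof (rule suminf_le)
    fix k
    have "emeasure M {w \<in> space M. \<bar>Z w\<bar> > real k} \<le> ennreal (c * exp (- (real k powr r)))"
      using tail[of "real k"] by (simp add: emeasure_eq_measure ennreal_leI)
    then have "ennreal (real (k + 1) ^ q) * emeasure M {w \<in> space M. \<bar>Z w\<bar> > real k}
        \<le> ennreal (real (k + 1) ^ q) * ennreal (c * exp (- (real k powr r)))"
      by (rule mult_left_mono) simp
    then show "ennreal (real (k + 1) ^ q) * emeasure M {w \<in> space M. \<bar>Z w\<bar> > real k}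
        \<le> ennreal (c * (real (k + 1) ^ q * exp (- (real k powr r))))"
      using c_nonneg by (simp add: ennreal_mult'[symmetric] mult_ac)
  qed auto
  also have "\<dots> = ennreal (c * tail_moment_const r q)"
    unfolding tail_moment_const_def using c_nonneg summable_tail_moment_series[OF r]
    by (subst suminf_ennreal2) (auto intro!: summable_mult simp: suminf_mult)
  finally show ?thesis .
qed

lemma (in prob_space) tail_bound_moment:
  fixes Z :: "'a \<Rightarrow> real" and q :: nat
  assumes Z_meas: "Z \<in> borel_measurable M" and r: "r > 0" and q: "q \<ge> 1"
    and tail: "\<And>t. t \<ge> 0 \<Longrightarrow> prob {w \<in> space M. \<bar>Z w\<bar> > t} \<le> c * exp (- (t powr r))"
  shows "integrable M (\<lambda>w. \<bar>Z w\<bar> ^ q)"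
    and "expectation (\<lambda>w. \<bar>Z w\<bar> ^ q) \<le> c * tail_moment_const r q"
proof -
  note nn_bound = nn_integral_abs_power_le_of_tail_bound[OF Z_meas r q tail]
  show "integrable M (\<lambda>w. \<bar>Z w\<bar> ^ q)"
    using nn_bound Z_meas by (intro integrableI_bounded) (auto simp: le_less_trans)
  have "expectation (\<lambda>w. \<bar>Z w\<bar> ^ q) = enn2real (\<integral>\<^sup>+w. ennreal (\<bar>Z w\<bar> ^ q) \<partial>M)"
    by (rule integral_eq_nn_integral) (use Z_meas in auto)
  also have "\<dots> \<le> c * tail_moment_const r q"
    using enn2real_mono[OF nn_bound] tail_bound_const_nonneg[OF tail] tail_moment_const_nonneg[OF r]
    by simp
  finally show "expectation (\<lambda>w. \<bar>Z w\<bar> ^ q) \<le> c * tail_moment_const r q" .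
qed

definition clip :: "real \<Rightarrow> real \<Rightarrow> real" where
  "clip T x = max (- T) (min T x)"

lemma clip_eq_self [simp]: "\<bar>x\<bar> \<le> T \<Longrightarrow> clip T x = x"
  unfolding clip_def by auto

lemma abs_clip_le: "T \<ge> 0 \<Longrightarrow> \<bar>clip T x\<bar> \<le> T"
  unfolding clip_def by auto

lemma abs_clip_le_abs: "T \<ge> 0 \<Longrightarrow> \<bar>clip T x\<bar> \<le> \<bar>x\<bar>"
  unfolding clip_def by auto

lemma borel_measurable_clip [measurable]: "clip T \<in> borel_measurable borel"
  unfolding clip_def by measurable

lemma max_abs_power_le: "(max \<bar>x\<bar> \<bar>y\<bar>) ^ q \<le> \<bar>x\<bar> ^ q + \<bar>y\<bar> ^ q" for x y :: real
  by (cases "\<bar>x\<bar> \<le> \<bar>y\<bar>") (auto simp: max_def)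

lemma abs_mult_le_power_sum:
  fixes x y :: real
  assumes "q \<ge> 2"
  shows "\<bar>x * y\<bar> \<le> \<bar>x\<bar> ^ q + \<bar>y\<bar> ^ q + 1"
proof -
  define m where "m = max \<bar>x\<bar> \<bar>y\<bar>"
  have m_nonneg: "m \<ge> 0"
    unfolding m_def by simp
  have "\<bar>x * y\<bar> \<le> m * m"
    unfolding m_def abs_mult by (intro mult_mono) auto
  also have "\<dots> \<le> m ^ q + 1"
  proof (cases "m \<le> 1")
    case True
    then show ?thesis
      using mult_le_one[of m m] zero_le_power[of m q] m_nonneg by linarith
  next
    case False
    then have "m ^ 2 \<le> m ^ q"
      using assms by (intro power_increasing) auto
    then show ?thesis by (simp add: power2_eq_square)
  qed
  also have "\<dots> \<le> \<bar>x\<bar> ^ q + \<bar>y\<bar> ^ q + 1"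
    using max_abs_power_le[of x y q] unfolding m_def by simp
  finally show ?thesis .
qed

lemma abs_mult_minus_clip_mult_le:
  fixes x y T :: real
  assumes T: "T > 0" and q: "q \<ge> 2"
  shows "\<bar>x * y - clip T x * clip T y\<bar> \<le> 2 * (\<bar>x\<bar> ^ q + \<bar>y\<bar> ^ q) / T ^ (q - 2)"
proof (cases "\<bar>x\<bar> \<le> T \<and> \<bar>y\<bar> \<le> T")
  case True
  then show ?thesis using T by simp
next
  case False
  define m where "m = max \<bar>x\<bar> \<bar>y\<bar>"
  have m_gt: "m > T"
    using False unfolding m_def by auto
  have "\<bar>x * y - clip T x * clip T y\<bar> \<le> \<bar>x\<bar> * \<bar>y\<bar> + \<bar>clip T x\<bar> * \<bar>clip T y\<bar>"
    unfolding abs_mult[symmetric] by (rule abs_triangle_ineq4)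
  also have "\<dots> \<le> m * m + m * m"
    using abs_clip_le_abs[of T x] abs_clip_le_abs[of T y] T
    unfolding m_def by (intro add_mono mult_mono) auto
  also have "\<dots> \<le> 2 * m ^ q / T ^ (q - 2)"
  proof -
    have "m * m * T ^ (q - 2) \<le> m * m * m ^ (q - 2)"
      using m_gt T by (intro mult_left_mono power_mono) auto
    also have "\<dots> = m ^ q"
      using q by (metis le_add_diff_inverse power_add power2_eq_square)
    finally show ?thesis
      using T by (simp add: pos_le_divide_eq)
  qed
  also have "\<dots> \<le> 2 * (\<bar>x\<bar> ^ q + \<bar>y\<bar> ^ q) / T ^ (q - 2)"
    using max_abs_power_le[of x y q] T unfolding m_def by (intro divide_right_mono) auto
  finally show ?thesis .
qed

lemma (in prob_space) clip_product_bias: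
  fixes U V :: "'a \<Rightarrow> real"
  assumes [measurable]: "U \<in> borel_measurable M" "V \<in> borel_measurable M"
    and U_int: "integrable M (\<lambda>w. \<bar>U w\<bar> ^ q)" and V_int: "integrable M (\<lambda>w. \<bar>V w\<bar> ^ q)"
    and U_mom: "expectation (\<lambda>w. \<bar>U w\<bar> ^ q) \<le> K" and V_mom: "expectation (\<lambda>w. \<bar>V w\<bar> ^ q) \<le> K"
    and T: "T > 0" and q: "q \<ge> 2"
  shows "\<bar>expectation (\<lambda>w. clip T (U w) * clip T (V w)) - expectation (\<lambda>w. U w * V w)\<bar>
    \<le> 4 * K / T ^ (q - 2)"
proof -
  have int_UV: "integrable M (\<lambda>w. U w * V w)"
    by (rule Bochner_Integration.integrable_bound[where f="\<lambda>w. \<bar>U w\<bar> ^ q + \<bar>V w\<bar> ^ q + 1"])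
      (use U_int V_int abs_mult_le_power_sum[OF q] in auto)
  have int_clip: "integrable M (\<lambda>w. clip T (U w) * clip T (V w))"
    by (rule integrable_const_bound[where B="T * T"])
      (use T abs_clip_le in \<open>auto simp: abs_mult intro!: mult_mono\<close>)
  have "\<bar>expectation (\<lambda>w. clip T (U w) * clip T (V w)) - expectation (\<lambda>w. U w * V w)\<bar>
      = \<bar>expectation (\<lambda>w. U w * V w - clip T (U w) * clip T (V w))\<bar>"
    using int_UV int_clip by (simp add: Bochner_Integration.integral_diff abs_minus_commute)
  also have "\<dots> \<le> expectation (\<lambda>w. \<bar>U w * V w - clip T (U w) * clip T (V w)\<bar>)"
    using integral_norm_bound[of M "\<lambda>w. U w * V w - clip T (U w) * clip T (V w)"] by simp
  also have "\<dots> \<le> expectation (\<lambda>w. 2 * (\<bar>U w\<bar> ^ q + \<bar>V w\<bar> ^ q) / T ^ (q - 2))"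
    using int_UV int_clip U_int V_int abs_mult_minus_clip_mult_le[OF T q]
    by (intro integral_mono) auto
  also have "\<dots> = 2 * (expectation (\<lambda>w. \<bar>U w\<bar> ^ q) + expectation (\<lambda>w. \<bar>V w\<bar> ^ q)) / T ^ (q - 2)"
    using U_int V_int by simp
  also have "\<dots> \<le> 4 * K / T ^ (q - 2)"
    using U_mom V_mom T by (intro divide_right_mono) auto
  finally show ?thesis .
qed

lemma (in prob_space) clip_product_bias_of_tail_bound:
  fixes U V :: "'a \<Rightarrow> real"
  assumes [measurable]: "U \<in> borel_measurable M" "V \<in> borel_measurable M"
    and r: "r > 0" and T: "T > 0" and q: "q \<ge> 2"
    and U_tail: "\<And>t. t \<ge> 0 \<Longrightarrow> prob {w \<in> space M. \<bar>U w\<bar> > t} \<le> c * exp (- (t powr r))"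
    and V_tail: "\<And>t. t \<ge> 0 \<Longrightarrow> prob {w \<in> space M. \<bar>V w\<bar> > t} \<le> c * exp (- (t powr r))"
  shows "\<bar>expectation (\<lambda>w. clip T (U w) * clip T (V w)) - expectation (\<lambda>w. U w * V w)\<bar>
    \<le> 4 * (c * tail_moment_const r q) / T ^ (q - 2)"
  using q by (intro clip_product_bias tail_bound_moment[OF _ r _ U_tail] tail_bound_moment[OF _ r _ V_tail] T)
    simp_all

lemma clipping_error_terms_le:
  fixes a b c e g r :: real and n p :: nat
  assumes n: "n > 0" and c: "c \<ge> 0" and p_le: "real p \<le> exp (real n powr g)"
  shows "real n * real p * (c * exp (- ((real n powr b) powr r)))
      + (real p)\<^sup>2 * (2 * exp (- (real n * (e * real n powr (- a))\<^sup>2 / (8 * (real n powr b) ^ 4))))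
    \<le> c * (real n * exp (real n powr g - real n powr (b * r)))
      + 2 * exp (2 * real n powr g - e\<^sup>2 / 8 * real n powr (1 - 2 * a - 4 * b))"
proof (rule add_mono)
  have "real n * real p * (c * exp (- ((real n powr b) powr r)))
      \<le> real n * exp (real n powr g) * (c * exp (- ((real n powr b) powr r)))"
    using p_le c by (intro mult_right_mono mult_left_mono) auto
  then show "real n * real p * (c * exp (- ((real n powr b) powr r)))
      \<le> c * (real n * exp (real n powr g - real n powr (b * r)))"
    using n by (simp add: powr_powr exp_diff exp_minus field_simps)
next
  have exponent: "real n * (e * real n powr (- a))\<^sup>2 / (8 * (real n powr b) ^ 4)
      = e\<^sup>2 / 8 * real n powr (1 - 2 * a - 4 * b)"
    using n
    by (simp add: powr_diff powr_minus power_mult_distrib powr_realpow[symmetric] powr_powr field_simps)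
      (simp add: powr_add)
  have "(real p)\<^sup>2 \<le> exp (2 * real n powr g)"
    using power_mono[OF p_le, of 2] by (simp add: exp_add[symmetric] power2_eq_square)
  then have "(real p)\<^sup>2 * (2 * exp (- (e\<^sup>2 / 8 * real n powr (1 - 2 * a - 4 * b))))
      \<le> exp (2 * real n powr g) * (2 * exp (- (e\<^sup>2 / 8 * real n powr (1 - 2 * a - 4 * b))))"
    by (rule mult_right_mono) simp
  then show "(real p)\<^sup>2 * (2 * exp (- (real n * (e * real n powr (- a))\<^sup>2 / (8 * (real n powr b) ^ 4))))
      \<le> 2 * exp (2 * real n powr g - e\<^sup>2 / 8 * real n powr (1 - 2 * a - 4 * b))"
    unfolding exponent by (simp add: mult.left_commute exp_add[symmetric])
qed

locale iid_sample = prob_space M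
  for M :: "'a measure" and Xs :: "nat \<Rightarrow> 'a \<Rightarrow> nat \<Rightarrow> real" and p n :: nat +
  assumes measurable_coordinate [measurable]: "\<And>i j. (\<lambda>w. Xs i w j) \<in> borel_measurable M"
    and indep_sample: "indep_vars (\<lambda>_. PiM {..<p} (\<lambda>_. borel)) (\<lambda>i w. restrict (Xs i w) {..<p}) {..<n}"
    and identically_distributed: "\<And>i. i < n \<Longrightarrow>
      distr M (PiM {..<p} (\<lambda>_. borel)) (\<lambda>w. restrict (Xs i w) {..<p})
      = distr M (PiM {..<p} (\<lambda>_. borel)) (\<lambda>w. restrict (Xs 0 w) {..<p})"
begin

definition max_deviation :: "'a \<Rightarrow> real" where
  "max_deviation w = Max (insert 0 {\<bar>(\<Sum>i<n. Xs i w j * Xs i w k) / real n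
      - expectation (\<lambda>w. Xs 0 w j * Xs 0 w k)\<bar> | j k. j < p \<and> k < p})"

lemma finite_deviations:
  "finite {\<bar>(\<Sum>i<n. Xs i w j * Xs i w k) / real n - expectation (\<lambda>w. Xs 0 w j * Xs 0 w k)\<bar>
    | j k. j < p \<and> k < p}"
proof -
  have "{\<bar>(\<Sum>i<n. Xs i w j * Xs i w k) / real n - expectation (\<lambda>w. Xs 0 w j * Xs 0 w k)\<bar> | j k. j < p \<and> k < p}
    = (\<lambda>(j, k). \<bar>(\<Sum>i<n. Xs i w j * Xs i w k) / real n - expectation (\<lambda>w. Xs 0 w j * Xs 0 w k)\<bar>)
        ` ({..<p} \<times> {..<p})"
    by auto
  then show ?thesis
    by simp
qed

lemma max_deviation_nonneg: "max_deviation w \<ge> 0"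
  unfolding max_deviation_def using finite_deviations by (intro Max_ge) auto

lemma max_deviation_gt_iff:
  assumes "eps \<ge> 0"
  shows "max_deviation w > eps \<longleftrightarrow> (\<exists>j<p. \<exists>k<p.
    \<bar>(\<Sum>i<n. Xs i w j * Xs i w k) / real n - expectation (\<lambda>w. Xs 0 w j * Xs 0 w k)\<bar> > eps)"
  using assms finite_deviations unfolding max_deviation_def by (subst Max_gr_iff) auto

lemma sets_max_deviation_gt:
  assumes "eps \<ge> 0"
  shows "{w \<in> space M. max_deviation w > eps} \<in> sets M"
proof -
  have "{w \<in> space M. max_deviation w > eps} = {w \<in> space M. \<exists>j<p. \<exists>k<p.
    \<bar>(\<Sum>i<n. Xs i w j * Xs i w k) / real n - expectation (\<lambda>w. Xs 0 w j * Xs 0 w k)\<bar> > eps}"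
    using max_deviation_gt_iff[OF assms] by blast
  also have "\<dots> \<in> sets M"
    by measurable
  finally show ?thesis .
qed

lemma measurable_restrict_sample [measurable]:
  "(\<lambda>w. restrict (Xs i w) {..<p}) \<in> measurable M (PiM {..<p} (\<lambda>_. borel))"
  by (rule measurable_restrict) simp

lemma distr_comp_eq:
  assumes i: "i < n" and g: "g \<in> borel_measurable (PiM {..<p} (\<lambda>_. borel))"
  shows "distr M borel (\<lambda>w. g (restrict (Xs i w) {..<p}))
    = distr M borel (\<lambda>w. g (restrict (Xs 0 w) {..<p}))"
  using distr_distr[OF g measurable_restrict_sample, of i] distr_distr[OF g measurable_restrict_sample, of 0]
    identically_distributed[OF i]
  by (simp add: comp_def)

lemma prob_abs_coordinate_gt_eq:
  assumes i: "i < n" and j: "j < p"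
  shows "prob {w \<in> space M. \<bar>Xs i w j\<bar> > T} = prob {w \<in> space M. \<bar>Xs 0 w j\<bar> > T}"
proof -
  have "distr M borel (\<lambda>w. Xs i w j) = distr M borel (\<lambda>w. Xs 0 w j)"
    using distr_comp_eq[OF i measurable_component_singleton] j by simp
  moreover have "prob {w \<in> space M. \<bar>Xs l w j\<bar> > T} = measure (distr M borel (\<lambda>w. Xs l w j)) {x. \<bar>x\<bar> > T}"
    for l
    by (subst measure_distr) (auto intro!: arg_cong[where f="measure M"])
  ultimately show ?thesis by simp
qed

definition coordinate_exceeds :: "real \<Rightarrow> nat \<times> nat \<Rightarrow> 'a set" where
  "coordinate_exceeds T = (\<lambda>(i, j). {w \<in> space M. \<bar>Xs i w j\<bar> > T})"

definition clip_sum_deviates :: "real \<Rightarrow> real \<Rightarrow> nat \<times> nat \<Rightarrow> 'a set" where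
  "clip_sum_deviates T t = (\<lambda>(j, k). {w \<in> space M. t \<le> \<bar>(\<Sum>i<n. clip T (Xs i w j) * clip T (Xs i w k))
      - real n * expectation (\<lambda>w. clip T (Xs 0 w j) * clip T (Xs 0 w k))\<bar>})"

lemma sets_coordinate_exceeds [measurable]: "coordinate_exceeds T ij \<in> sets M"
  unfolding coordinate_exceeds_def by (induct ij) (simp only: prod.case, measurable)

lemma sets_clip_sum_deviates [measurable]: "clip_sum_deviates T t jk \<in> sets M"
  unfolding clip_sum_deviates_def by (induct jk) (simp only: prod.case, measurable)

lemma prob_clip_sum_deviates:
  assumes j: "j < p" and k: "k < p" and n: "n > 0" and T: "T > 0" and t: "t \<ge> 0"
  shows "prob (clip_sum_deviates T t (j, k)) \<le> 2 * exp (- (t\<^sup>2 / (2 * real n * T ^ 4)))"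
proof -
  define g where "g = (\<lambda>f::nat \<Rightarrow> real. clip T (f j) * clip T (f k))"
  have g_meas: "g \<in> borel_measurable (PiM {..<p} (\<lambda>_. borel))"
    unfolding g_def using j k
    by (intro borel_measurable_times measurable_compose[OF _ borel_measurable_clip]
        measurable_component_singleton) auto
  define Y where "Y = (\<lambda>i w. g (restrict (Xs i w) {..<p}))"
  have Y_eq: "Y i w = clip T (Xs i w j) * clip T (Xs i w k)" for i w
    unfolding Y_def g_def using j k by simp
  interpret Hoeffding_ineq_iid M "{..<n}" Y "Y 0" "- (T * T)" "T * T" "expectation (Y 0)"
  proof unfold_locales
    show "indep_vars (\<lambda>_. borel) Y {..<n}"
      unfolding Y_def by (rule indep_vars_compose2[OF indep_sample]) (use g_meas in auto)
    show "distr M borel (Y i) = distr M borel (Y 0)" if "i \<in> {..<n}" for i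
      unfolding Y_def using that g_meas by (intro distr_comp_eq) auto
    show "AE w in M. Y 0 w \<in> {- (T * T)..T * T}"
    proof (rule AE_I2)
      fix w
      have "\<bar>Y 0 w\<bar> \<le> T * T"
        unfolding Y_eq abs_mult using T by (intro mult_mono abs_clip_le) auto
      then show "Y 0 w \<in> {- (T * T)..T * T}"
        by (simp add: abs_le_iff)
    qed
  qed (use g_meas in \<open>simp_all add: Y_def\<close>)
  have "prob {w \<in> space M. t \<le> \<bar>(\<Sum>i<n. Y i w) - real n * expectation (Y 0)\<bar>}
      \<le> 2 * exp (- 2 * t\<^sup>2 / (real n * (T * T - - (T * T))\<^sup>2))"
  proof -
    have "- (T * T) < T * T" and "{..<n} \<noteq> {}"
      using n T by auto
    from Hoeffding_ineq_abs_ge[OF t this] show ?thesis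
      unfolding card_lessThan .
  qed
  also have "- 2 * t\<^sup>2 / (real n * (T * T - - (T * T))\<^sup>2) = - (t\<^sup>2 / (2 * real n * T ^ 4))"
    by (simp add: power2_eq_square power4_eq_xxxx)
  finally show ?thesis
    unfolding clip_sum_deviates_def Y_eq[abs_def] by simp
qed

lemma clip_sum_deviation_if_max_deviation_gt:
  assumes n: "n > 0" and eps: "eps > 0" and dev: "max_deviation w > eps"
    and bounded: "\<And>i j. i < n \<Longrightarrow> j < p \<Longrightarrow> \<bar>Xs i w j\<bar> \<le> T"
    and bias: "\<And>j k. j < p \<Longrightarrow> k < p \<Longrightarrow>
      \<bar>expectation (\<lambda>w. clip T (Xs 0 w j) * clip T (Xs 0 w k)) - expectation (\<lambda>w. Xs 0 w j * Xs 0 w k)\<bar>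
        \<le> eps / 2"
  obtains j k where "j < p" "k < p"
    "real n * eps / 2 \<le> \<bar>(\<Sum>i<n. clip T (Xs i w j) * clip T (Xs i w k))
      - real n * expectation (\<lambda>w. clip T (Xs 0 w j) * clip T (Xs 0 w k))\<bar>"
proof -
  obtain j k where jk: "j < p" "k < p" and gt:
    "\<bar>(\<Sum>i<n. Xs i w j * Xs i w k) / real n - expectation (\<lambda>w. Xs 0 w j * Xs 0 w k)\<bar> > eps"
    using dev max_deviation_gt_iff eps by auto
  define S where "S = (\<Sum>i<n. clip T (Xs i w j) * clip T (Xs i w k))"
  define \<mu> where "\<mu> = expectation (\<lambda>w. clip T (Xs 0 w j) * clip T (Xs 0 w k))"
  have S_eq: "S = (\<Sum>i<n. Xs i w j * Xs i w k)"
    unfolding S_def using bounded jk by simp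
  have "eps / 2 < \<bar>S / real n - \<mu>\<bar>"
    using gt bias[OF jk] unfolding \<mu>_def S_eq by linarith
  then have "real n * eps / 2 \<le> real n * \<bar>S / real n - \<mu>\<bar>"
    using n by simp
  also have "\<dots> = \<bar>S - real n * \<mu>\<bar>"
    using n by (simp add: abs_mult[symmetric] field_simps)
  finally show ?thesis
    using that jk unfolding S_def \<mu>_def by blast
qed

lemma max_deviation_gt_subset:
  assumes n: "n > 0" and eps: "eps > 0"
    and bias: "\<And>j k. j < p \<Longrightarrow> k < p \<Longrightarrow>
      \<bar>expectation (\<lambda>w. clip T (Xs 0 w j) * clip T (Xs 0 w k)) - expectation (\<lambda>w. Xs 0 w j * Xs 0 w k)\<bar>
        \<le> eps / 2"
  shows "{w \<in> space M. max_deviation w > eps}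
    \<subseteq> (\<Union>ij\<in>{..<n} \<times> {..<p}. coordinate_exceeds T ij)
      \<union> (\<Union>jk\<in>{..<p} \<times> {..<p}. clip_sum_deviates T (real n * eps / 2) jk)"
proof
  fix w assume "w \<in> {w \<in> space M. max_deviation w > eps}"
  then have w: "w \<in> space M" "max_deviation w > eps" by auto
  show "w \<in> (\<Union>ij\<in>{..<n} \<times> {..<p}. coordinate_exceeds T ij)
      \<union> (\<Union>jk\<in>{..<p} \<times> {..<p}. clip_sum_deviates T (real n * eps / 2) jk)"
  proof (cases "\<forall>i<n. \<forall>j<p. \<bar>Xs i w j\<bar> \<le> T")
    case True
    with n eps w bias obtain j k where "j < p" "k < p"
      "real n * eps / 2 \<le> \<bar>(\<Sum>i<n. clip T (Xs i w j) * clip T (Xs i w k))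
        - real n * expectation (\<lambda>w. clip T (Xs 0 w j) * clip T (Xs 0 w k))\<bar>"
      by (elim clip_sum_deviation_if_max_deviation_gt) auto
    with w show ?thesis
      unfolding clip_sum_deviates_def by auto
  next
    case False
    then obtain i j where "i < n" "j < p" "\<bar>Xs i w j\<bar> > T"
      by (auto simp: not_le)
    with w show ?thesis
      unfolding coordinate_exceeds_def by blast
  qed
qed

lemma prob_max_deviation_gt:
  assumes n: "n > 0" and T: "T > 0" and eps: "eps > 0"
    and tail: "\<And>j. j < p \<Longrightarrow> prob {w \<in> space M. \<bar>Xs 0 w j\<bar> > T} \<le> P\<^sub>T"
    and bias: "\<And>j k. j < p \<Longrightarrow> k < p \<Longrightarrow>
      \<bar>expectation (\<lambda>w. clip T (Xs 0 w j) * clip T (Xs 0 w k)) - expectation (\<lambda>w. Xs 0 w j * Xs 0 w k)\<bar>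
        \<le> eps / 2"
  shows "prob {w \<in> space M. max_deviation w > eps}
    \<le> real n * real p * P\<^sub>T + (real p)\<^sup>2 * (2 * exp (- (real n * eps\<^sup>2 / (8 * T ^ 4))))"
proof -
  let ?A = "\<Union>ij\<in>{..<n} \<times> {..<p}. coordinate_exceeds T ij"
  let ?B = "\<Union>jk\<in>{..<p} \<times> {..<p}. clip_sum_deviates T (real n * eps / 2) jk"
  have "prob {w \<in> space M. max_deviation w > eps} \<le> prob ?A + prob ?B"
    using max_deviation_gt_subset[OF n eps bias]
    by (intro order_trans[OF finite_measure_mono measure_Un_le]) (simp_all add: sets.finite_UN)
  also have "\<dots> \<le> (\<Sum>ij\<in>{..<n} \<times> {..<p}. prob (coordinate_exceeds T ij))
      + (\<Sum>jk\<in>{..<p} \<times> {..<p}. prob (clip_sum_deviates T (real n * eps / 2) jk))"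
    by (intro add_mono measure_UNION_le sets_coordinate_exceeds sets_clip_sum_deviates
        finite_SigmaI finite_lessThan)
  also have "\<dots> \<le> (\<Sum>ij\<in>{..<n} \<times> {..<p}. P\<^sub>T)
      + (\<Sum>jk\<in>{..<p} \<times> {..<p}. 2 * exp (- (real n * eps\<^sup>2 / (8 * T ^ 4))))"
  proof (intro add_mono sum_mono)
    fix ij assume "ij \<in> {..<n} \<times> {..<p}"
    then obtain i j where "ij = (i, j)" "i < n" "j < p" by blast
    then show "prob (coordinate_exceeds T ij) \<le> P\<^sub>T"
      unfolding coordinate_exceeds_def using prob_abs_coordinate_gt_eq[of i j T] tail[of j] by simp
  next
    fix jk assume "jk \<in> {..<p} \<times> {..<p}"
    then obtain j k where jk: "jk = (j, k)" "j < p" "k < p" by blast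
    have "(real n * eps / 2)\<^sup>2 / (2 * real n * T ^ 4) = real n * eps\<^sup>2 / (8 * T ^ 4)"
      using n by (simp add: field_simps power2_eq_square)
    then show "prob (clip_sum_deviates T (real n * eps / 2) jk) \<le> 2 * exp (- (real n * eps\<^sup>2 / (8 * T ^ 4)))"
      using prob_clip_sum_deviates[OF jk(2,3) n T, of "real n * eps / 2"] eps unfolding jk(1) by simp
  qed
  also have "\<dots> = real n * real p * P\<^sub>T + (real p)\<^sup>2 * (2 * exp (- (real n * eps\<^sup>2 / (8 * T ^ 4))))"
    by (simp add: power2_eq_square)
  finally show ?thesis .
qed

lemma prob_mult_max_deviation_gt_le:
  assumes n: "n > 0" and e: "e > 0" and s: "s \<le> real n powr a"
  shows "prob {w \<in> space M. s * max_deviation w > e}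
    \<le> prob {w \<in> space M. max_deviation w > e * real n powr (- a)}"
proof (rule finite_measure_mono)
  show "{w \<in> space M. s * max_deviation w > e} \<subseteq> {w \<in> space M. max_deviation w > e * real n powr (- a)}"
  proof safe
    fix w assume "w \<in> space M" "s * max_deviation w > e"
    moreover have "s * max_deviation w \<le> real n powr a * max_deviation w"
      using s max_deviation_nonneg by (rule mult_right_mono)
    ultimately have "e / real n powr a < max_deviation w"
      using n by (simp add: pos_divide_less_eq mult.commute)
    then show "max_deviation w > e * real n powr (- a)"
      by (simp add: powr_minus divide_inverse)
  qed
  show "{w \<in> space M. max_deviation w > e * real n powr (- a)} \<in> sets M"
    using e by (intro sets_max_deviation_gt) simp
qed

lemma prob_mult_max_deviation_gt_bound:
  fixes a b g e r c s :: real and q :: nat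
  assumes n: "n > 0" and r: "r > 0" and b: "b > 0" and e: "e > 0" and q: "q \<ge> 2" and c: "c \<ge> 0"
    and tail: "\<And>j t. j < p \<Longrightarrow> t \<ge> 0 \<Longrightarrow> prob {w \<in> space M. \<bar>Xs 0 w j\<bar> > t} \<le> c * exp (- (t powr r))"
    and p_le: "real p \<le> exp (real n powr g)"
    and s: "s \<le> real n powr a"
    and bias: "8 * c * tail_moment_const r q \<le> e * real n powr (b * real (q - 2) - a)"
  shows "prob {w \<in> space M. s * max_deviation w > e}
    \<le> c * (real n * exp (real n powr g - real n powr (b * r)))
      + 2 * exp (2 * real n powr g - e\<^sup>2 / 8 * real n powr (1 - 2 * a - 4 * b))"
proof -
  define T where "T = real n powr b"
  define eps where "eps = e * real n powr (- a)"
  have T: "T > 0" and eps: "eps > 0"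
    unfolding T_def eps_def using n e by auto
  have T_power: "T ^ (q - 2) = real n powr (b * real (q - 2))"
    unfolding T_def using n by (simp add: powr_realpow[symmetric] powr_powr)
  have "4 * (c * tail_moment_const r q) / T ^ (q - 2) \<le> eps / 2"
    using bias n unfolding T_power eps_def by (simp add: field_simps powr_diff powr_minus)
  then have bias_clip: "\<bar>expectation (\<lambda>w. clip T (Xs 0 w j) * clip T (Xs 0 w k))
      - expectation (\<lambda>w. Xs 0 w j * Xs 0 w k)\<bar> \<le> eps / 2" if "j < p" "k < p" for j k
    using clip_product_bias_of_tail_bound[OF _ _ r T q tail[OF that(1)] tail[OF that(2)]] by simp
  have "prob {w \<in> space M. s * max_deviation w > e} \<le> prob {w \<in> space M. max_deviation w > eps}"
    unfolding eps_def by (rule prob_mult_max_deviation_gt_le[OF n e s])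
  also have "\<dots> \<le> real n * real p * (c * exp (- (T powr r)))
        + (real p)\<^sup>2 * (2 * exp (- (real n * eps\<^sup>2 / (8 * T ^ 4))))"
    using T by (intro prob_max_deviation_gt n T eps tail bias_clip) auto
  also have "\<dots> \<le> c * (real n * exp (real n powr g - real n powr (b * r)))
      + 2 * exp (2 * real n powr g - e\<^sup>2 / 8 * real n powr (1 - 2 * a - 4 * b))"
    unfolding T_def eps_def by (rule clipping_error_terms_le[OF n c p_le])
  finally show ?thesis .
qed

end

lemma rate_exponent_inequality:
  fixes r r1 r2 c :: real
  assumes r: "r > 0" and r1: "r1 < r / (8 + r)" and r2: "r2 \<le> (4 + r) / (32 + 4 * r) - r1 / 4"
    and c: "c \<ge> 0"
  shows "4 * (r1 - c) + (r1 - c) * r + 4 * (r2 - c) * r < r"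
proof -
  have r8: "8 + r > 0"
    using r by simp
  have "4 * r2 \<le> (4 + r) / (8 + r) - r1"
    using r2 r8 by (simp add: field_simps)
  then have "4 * r2 * r \<le> r * (4 + r) / (8 + r) - r1 * r"
    using r by (metis left_diff_distrib mult.commute mult_right_mono less_imp_le times_divide_eq_left)
  moreover have "4 * r1 < 4 * r / (8 + r)"
    using r1 by simp
  moreover have "r * (4 + r) / (8 + r) + 4 * r / (8 + r) = r"
    using r8 by (subst add_divide_distrib[symmetric], subst nonzero_divide_eq_eq) (auto simp: algebra_simps)
  moreover have "c * r \<ge> 0"
    using r c by simp
  ultimately show ?thesis
    using c by (simp add: algebra_simps)
qed

(* T = n^b is the clipping level and q the order of the moments that bound the clipping bias. *)
lemma exists_truncation_exponents:
  fixes g a r :: real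
  assumes g: "g > 0" and r: "r > 0" and rate: "4 * g + g * r + 2 * a * r < r"
  obtains b :: real and q :: nat
  where "b > 0" "g < b * r" "4 * b < 1 - 2 * a - g" "q \<ge> 2" "a < b * real (q - 2)"
proof -
  define lo where "lo = g / r"
  define hi where "hi = (1 - 2 * a - g) / 4"
  have "lo < hi"
    unfolding lo_def hi_def using rate r by (simp add: field_simps)
  define b where "b = (lo + hi) / 2"
  have "lo < b" "b < hi"
    unfolding b_def using \<open>lo < hi\<close> by simp_all
  then have b_gt: "g / r < b" and b_lt: "4 * b < 1 - 2 * a - g"
    unfolding lo_def hi_def by simp_all
  have b_pos: "b > 0"
    using less_trans[OF divide_pos_pos[OF g r] b_gt] .
  have "g < b * r"
    using b_gt r by (simp add: divide_less_eq)
  obtain N :: nat where "a / b < real N"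
    using reals_Archimedean2 by blast
  then have "a < b * real (N + 2 - 2)"
    using b_pos by (simp add: divide_less_eq mult.commute)
  with b_pos \<open>g < b * r\<close> b_lt show ?thesis
    by (intro that[of b "N + 2"]) simp_all
qed

lemma tendsto_deviation_bound:
  fixes g h\<^sub>1 h\<^sub>2 e C :: real
  assumes g: "g > 0" and h\<^sub>1: "g < h\<^sub>1" and h\<^sub>2: "g < h\<^sub>2" and e: "e > 0"
  shows "(\<lambda>n::nat. C * (real n * exp (real n powr g - real n powr h\<^sub>1))
    + 2 * exp (2 * real n powr g - e\<^sup>2 / 8 * real n powr h\<^sub>2)) \<longlonglongrightarrow> 0"
proof -
  have "(\<lambda>n::nat. real n * exp (real n powr g - real n powr h\<^sub>1)) \<longlonglongrightarrow> 0"
    using g h\<^sub>1 by real_asymp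
  moreover have "(\<lambda>n::nat. exp (2 * real n powr g - e\<^sup>2 / 8 * real n powr h\<^sub>2)) \<longlonglongrightarrow> 0"
    using g h\<^sub>2 e by real_asymp
  ultimately show ?thesis
    by (intro tendsto_add_zero tendsto_mult_right_zero)
qed

lemma eventually_le_mult_powr:
  fixes C e h :: real
  assumes "e > 0" "h > 0"
  shows "\<forall>\<^sub>F n in sequentially. C \<le> e * real n powr h"
  using assms by real_asymp

lemma maxdev_eq_max_deviation:
  assumes "iid_sample (M n) (X n) (p n) n"
  shows "maxdev M p X n = iid_sample.max_deviation (M n) (X n) (p n) n"
  by (rule ext) (simp only: maxdev_def Scov_def Theta_def iid_sample.max_deviation_def[OF assms])

theorem lemma2:
  fixes M :: "nat \<Rightarrow> 'a measure" and p :: "nat \<Rightarrow> nat"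
    and X :: "nat \<Rightarrow> nat \<Rightarrow> 'a \<Rightarrow> nat \<Rightarrow> real"
    and r r1 r2 c :: real
  assumes prob: "\<And>n. prob_space (M n)"
    and meas: "\<And>n i j. (\<lambda>w. X n i w j) \<in> borel_measurable (M n)"
    and indep: "\<And>n. prob_space.indep_vars (M n) (\<lambda>_. PiM {..<p n} (\<lambda>_. borel))
                   (\<lambda>i w. restrict (X n i w) {..<p n}) {..<n}"
    and ident: "\<And>n i. i < n \<Longrightarrow>
        distr (M n) (PiM {..<p n} (\<lambda>_. borel)) (\<lambda>w. restrict (X n i w) {..<p n})
      = distr (M n) (PiM {..<p n} (\<lambda>_. borel)) (\<lambda>w. restrict (X n 0 w) {..<p n})"
    and mean0: "\<And>n j. j < p n \<Longrightarrow> integral\<^sup>L (M n) (\<lambda>w. X n 0 w j) = 0"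
    and posdef: "\<And>n v. (\<exists>j < p n. v j \<noteq> 0) \<Longrightarrow>
        (\<Sum>j<p n. \<Sum>k<p n. v j * Theta M X n j k * v k) > 0"
    and C1: "\<exists>K. \<forall>n j k. j < p n \<longrightarrow> k < p n \<longrightarrow> \<bar>Theta M X n j k\<bar> \<le> K"
    and C1': "\<exists>d>0. \<forall>n j k. j < p n \<longrightarrow> k < p n \<longrightarrow> Theta M X n j k \<noteq> 0
                 \<longrightarrow> \<bar>Theta M X n j k\<bar> \<ge> d"
    and C2: "\<exists>K. \<forall>n.
        (\<forall>a\<in>pairs (p n). \<forall>b\<in>pairs (p n). \<bar>Jmat M p X n a b\<bar> \<le> K)
      \<and> (\<exists>B. is_inverse_on (Jmat M p X n) B (xi M p X n)
           \<and> (\<forall>a\<in>xi M p X n. \<forall>b\<in>xi M p X n. \<bar>B a b\<bar> \<le> K)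
           \<and> (\<forall>a\<in>xi M p X n. \<bar>\<Sum>b\<in>xi M p X n. B a b * hvec M p X n b\<bar> \<le> K))"
    and C3: "\<exists>c3>0. \<forall>n. m0 M p X n \<ge> 1 \<longrightarrow> (\<forall>l\<in>xi M p X n. \<forall>x :: nat \<times> nat \<Rightarrow> real.
        (\<Sum>a\<in>xi M p X n. \<bar>(\<Sum>b\<in>xi M p X n - {l}. Jmat M p X n a b * x b) - hvec M p X n a\<bar>) > c3)"
    and r_pos: "r > 0"
    and C4: "\<exists>c4>0. \<forall>n j t. j < p n \<longrightarrow> t \<ge> 0 \<longrightarrow>
        measure (M n) {w \<in> space (M n). \<bar>X n 0 w j\<bar> > t} < c4 * exp (- (t powr r))"
    and r1: "0 < r1" "r1 < r / (8 + r)"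
    and r2: "r2 = min (r / (32 + 4 * r)) ((4 + r) / (32 + 4 * r) - r1 / 4)"
    and c: "0 < c" "c < min r1 r2"
    and p_rate: "(\<lambda>n. real (p n)) \<in> o(\<lambda>n. exp (real n powr (r1 - c)))"
    and m0_rate: "(\<lambda>n. real (m0 M p X n)) \<in> o(\<lambda>n. real n powr (r2 - c))"
  shows "\<forall>e>0. (\<lambda>n. measure (M n)
            {w \<in> space (M n). (real (m0 M p X n))\<^sup>2 * maxdev M p X n w > e}) \<longlonglongrightarrow> 0"
proof (intro allI impI)
  fix e :: real assume e: "e > 0"
  obtain c4 where c4: "c4 > 0" and tail: "\<And>n j t. j < p n \<Longrightarrow> t \<ge> 0 \<Longrightarrow>
      measure (M n) {w \<in> space (M n). \<bar>X n 0 w j\<bar> > t} \<le> c4 * exp (- (t powr r))"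
    using C4 by (blast intro: less_imp_le)
  define g where "g = r1 - c"
  define a where "a = 2 * (r2 - c)"
  have g: "g > 0"
    using c unfolding g_def by simp
  have "4 * g + g * r + 2 * a * r < r"
    using rate_exponent_inequality[OF r_pos r1(2), of r2 c] r2 c unfolding g_def a_def by simp
  then obtain b q where b: "b > 0" "g < b * r" "4 * b < 1 - 2 * a - g" and q: "q \<ge> 2" "a < b * real (q - 2)"
    by (rule exists_truncation_exponents[OF g r_pos])
  define bound where "bound n = c4 * (real n * exp (real n powr g - real n powr (b * r)))
      + 2 * exp (2 * real n powr g - e\<^sup>2 / 8 * real n powr (1 - 2 * a - 4 * b))" for n :: nat
  have bias: "\<forall>\<^sub>F n in sequentially.
      8 * c4 * tail_moment_const r q \<le> e * real n powr (b * real (q - 2) - a)"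
    using q(2) by (intro eventually_le_mult_powr e) simp
  have eventually_bound: "\<forall>\<^sub>F n in sequentially.
      measure (M n) {w \<in> space (M n). (real (m0 M p X n))\<^sup>2 * maxdev M p X n w > e} \<le> bound n"
    using eventually_gt_at_top[of 0] landau_o.smallD[OF m0_rate zero_less_one]
      landau_o.smallD[OF p_rate zero_less_one] bias
  proof eventually_elim
    case (elim n)
    have sample: "iid_sample (M n) (X n) (p n) n"
      unfolding iid_sample_def iid_sample_axioms_def using prob meas indep ident by blast
    have "(real (m0 M p X n))\<^sup>2 \<le> (real n powr (r2 - c))\<^sup>2"
      using elim(2) by (intro power_mono) auto
    also have "\<dots> = real n powr a"
      unfolding a_def using elim(1) by (simp add: powr_realpow[symmetric] powr_powr mult.commute)
    finally have m0_le: "(real (m0 M p X n))\<^sup>2 \<le> real n powr a" .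
    show ?case
      unfolding maxdev_eq_max_deviation[where M=M and X=X and p=p, OF sample] bound_def
      by (rule iid_sample.prob_mult_max_deviation_gt_bound[OF sample elim(1) r_pos b(1) e q(1) _ tail _ m0_le elim(4)])
        (use c4 elim(3) in \<open>simp_all add: g_def\<close>)
  qed
  have "bound \<longlonglongrightarrow> 0"
    unfolding bound_def by (rule tendsto_deviation_bound[OF g b(2) _ e]) (use b in linarith)
  then show "(\<lambda>n. measure (M n)
      {w \<in> space (M n). (real (m0 M p X n))\<^sup>2 * maxdev M p X n w > e}) \<longlonglongrightarrow> 0"
    by (intro tendsto_sandwich[OF _ eventually_bound tendsto_const]) simp_all
qed

end
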